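(* Let $X$ be a topological space in which every open set is a union of countably many clopen sets. The following are equivalent: (1) $X$ has the bounded-ideal convergence property; (2) for each family $\{f_d\}_{d\in\mathbb{N}\times\mathbb{N}}$ of Borel real-valued functions on $X$ which $\mathcal{I}_b$-converges to $0$, there is $A\in\mathcal{I}_b^*$ such that $\{f_d\}_{d\in A}$ converges pointwise to $0$; (3) for each family $\{f_d\}_{d\in\mathbb{N}\times\mathbb{N}}$ of Borel real-valued functions on $X$ which $\mathcal{I}_b$-converges to a Borel function $f$, there is $A\in\mathcal{I}_b^*$ such that $\{f_d\}_{d\in A}$ converges pointwise to $f$; (4) for each family $\{f_d\}_{d\in\mathbb{N}\times\mathbb{N}}$ of Borel real-valued functions on $X$ which $\mathcal{I}_b$-converges to a function $f:X\to\mathbb{R}$, there is $A\in\mathcal{I}_b^*$ such that $\{f_d\}_{d\in A}$ converges pointwise to $f$.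
   Context: For $h\in\mathbb{N}^{\mathbb{N}}$ let $A_h=\{(n,m)\in\mathbb{N}\times\mathbb{N}:m\le h(n)\}$. The bounded-ideal is $\mathcal{I}_b=\{B\subseteq\mathbb{N}\times\mathbb{N}:\exists h\in\mathbb{N}^{\mathbb{N}},\ B\subseteq A_h\}$ and $\mathcal{I}_b^*=\{(\mathbb{N}\times\mathbb{N})\setminus B:B\in\mathcal{I}_b\}$. A family $\{f_d\}_{d\in\mathbb{N}\times\mathbb{N}}$ of real functions on $X$ $\mathcal{I}_b$-converges to $f$ if for each $x\in X$ and $\epsilon>0$, $\{d:|f_d(x)-f(x)|<\epsilon\}\in\mathcal{I}_b^*$. For infinite $A$, $\{f_d\}_{d\in A}$ converges pointwise to $f$ if for each $x$ and $\epsilon>0$ only finitely many $d\in A$ have $|f_d(x)-f(x)|\ge\epsilon$. $X$ has the bounded-ideal convergence property if for each family $\{f_d\}_{d\in\mathbb{N}\times\mathbb{N}}$ of continuous real-valued functions on $X$ which $\mathcal{I}_b$-converges to $0$ there is $A\in\mathcal{I}_b^*$ with $\{f_d\}_{d\in A}$ converging pointwise to $0$. *)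

theory Defs
  imports "HOL-Analysis.Analysis"
begin

definition A_h :: "(nat \<Rightarrow> nat) \<Rightarrow> (nat \<times> nat) set" where
  "A_h h = {(n, m). m \<le> h n}"

definition I_b :: "(nat \<times> nat) set set" where
  "I_b = {B. \<exists>h. B \<subseteq> A_h h}"

definition I_b_dual :: "(nat \<times> nat) set set" where
  "I_b_dual = {UNIV - B | B. B \<in> I_b}"

definition Ib_converges :: "(nat \<times> nat \<Rightarrow> 'a \<Rightarrow> real) \<Rightarrow> ('a \<Rightarrow> real) \<Rightarrow> bool" where
  "Ib_converges fs f \<longleftrightarrow>
     (\<forall>x. \<forall>\<epsilon>>0. {d. \<bar>fs d x - f x\<bar> < \<epsilon>} \<in> I_b_dual)"

definition pointwise_conv_on :: "(nat \<times> nat) set \<Rightarrow> (nat \<times> nat \<Rightarrow> 'a \<Rightarrow> real) \<Rightarrow> ('a \<Rightarrow> real) \<Rightarrow> bool" where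
  "pointwise_conv_on A fs f \<longleftrightarrow>
     (\<forall>x. \<forall>\<epsilon>>0. finite {d \<in> A. \<bar>fs d x - f x\<bar> \<ge> \<epsilon>})"

definition bounded_ideal_convergence_property :: "'a::topological_space itself \<Rightarrow> bool" where
  "bounded_ideal_convergence_property TYPE('a) \<longleftrightarrow>
     (\<forall>fs :: nat \<times> nat \<Rightarrow> 'a \<Rightarrow> real.
        (\<forall>d. continuous_on UNIV (fs d)) \<longrightarrow> Ib_converges fs (\<lambda>_. 0) \<longrightarrow>
        (\<exists>A \<in> I_b_dual. pointwise_conv_on A fs (\<lambda>_. 0)))"

end

theory Submission
  imports Defs
begin

(* Everything reduces to a property of families of SETS.  Call a class S of subsets
   of X "I_b-diagonalizable" if for every family (L d) of members of S indexed by N x N in which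
   every point lies in only I_b-few sets (finitely many per row), there is one bound h such that
   every point lies in only finitely many L (n,m) with m > h n.

   (1) => diagonalizable clopen sets: apply the convergence property to indicator functions.
   Diagonalizable clopen sets => diagonalizable Borel sets: under the hypothesis that open sets
   are countable unions of clopens, every Borel set is a pointwise limit of a sequence of clopen
   sets ("clopen limit"); these form a sigma-algebra, and diagonalizability transfers from the
   clopen sets to their limits.  Both facts rest on a uniform-modulus lemma for countably many
   convergent sequences of clopen sets.  Diagonalizable Borel sets => (4): apply it to the
   Borel sets where the n-th row of functions is at least 1/(n+1) away from the limit. *)

lemma I_b_iff_rows_finite: "B \<in> I_b \<longleftrightarrow> (\<forall>n. finite {m. (n, m) \<in> B})"
proof
  assume "B \<in> I_b"
  then obtain h where "B \<subseteq> A_h h" by (auto simp: I_b_def)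
  then have "{m. (n, m) \<in> B} \<subseteq> {..h n}" for n by (auto simp: A_h_def)
  then show "\<forall>n. finite {m. (n, m) \<in> B}" by (meson finite_atMost finite_subset)
next
  assume "\<forall>n. finite {m. (n, m) \<in> B}"
  then have "\<forall>n. \<exists>b. \<forall>m\<in>{m. (n, m) \<in> B}. m \<le> b"
    by (simp add: finite_nat_set_iff_bounded_le)
  then obtain h where "\<forall>n. \<forall>m\<in>{m. (n, m) \<in> B}. m \<le> h n" by metis
  then have "B \<subseteq> A_h h" by (auto simp: A_h_def)
  then show "B \<in> I_b" by (auto simp: I_b_def)
qed

lemma I_b_dual_iff: "A \<in> I_b_dual \<longleftrightarrow> UNIV - A \<in> I_b"
  unfolding I_b_dual_def by (auto simp: double_diff)

lemma I_b_dual_iff_cofinal: "A \<in> I_b_dual \<longleftrightarrow> (\<exists>h. UNIV - A_h h \<subseteq> A)"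
  unfolding I_b_dual_iff I_b_def by blast

lemma I_b_subset: "B \<in> I_b \<Longrightarrow> B' \<subseteq> B \<Longrightarrow> B' \<in> I_b"
  unfolding I_b_def by blast

lemma I_b_Un_finite: "B \<in> I_b \<Longrightarrow> finite F \<Longrightarrow> B \<union> F \<in> I_b"
proof (unfold I_b_iff_rows_finite, intro allI)
  fix n assume "\<forall>n. finite {m. (n, m) \<in> B}" "finite F"
  moreover have "{m. (n, m) \<in> B \<union> F} \<subseteq> {m. (n, m) \<in> B} \<union> snd ` F" by force
  ultimately show "finite {m. (n, m) \<in> B \<union> F}" by (meson finite_UnI finite_imageI finite_subset)
qed

lemma I_b_finitely_many_rows: "B \<in> I_b \<Longrightarrow> finite {d \<in> B. fst d < N}"
proof -
  assume "B \<in> I_b"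
  then have "finite (SIGMA n:{..<N}. {m. (n, m) \<in> B})" by (auto simp: I_b_iff_rows_finite)
  moreover have "{d \<in> B. fst d < N} \<subseteq> (SIGMA n:{..<N}. {m. (n, m) \<in> B})" by auto
  ultimately show ?thesis by (rule finite_subset[rotated])
qed

lemma Ib_converges_iff:
  "Ib_converges fs f \<longleftrightarrow> (\<forall>x \<epsilon>. \<epsilon> > 0 \<longrightarrow> {d. \<epsilon> \<le> \<bar>fs d x - f x\<bar>} \<in> I_b)"
proof -
  have "UNIV - {d. \<bar>fs d x - f x\<bar> < \<epsilon>} = {d. \<epsilon> \<le> \<bar>fs d x - f x\<bar>}" for x \<epsilon> by auto
  then show ?thesis unfolding Ib_converges_def I_b_dual_iff by simp
qed

lemma Ib_converges_row_finite:
  assumes "Ib_converges fs f" "\<epsilon> > 0"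
  shows "finite {m. \<epsilon> \<le> \<bar>fs (n, m) x - f x\<bar>}"
  using assms by (auto simp: Ib_converges_iff I_b_iff_rows_finite)

lemma Ib_converges_row_tendsto:
  assumes "Ib_converges fs f"
  shows "(\<lambda>m. fs (n, m) x) \<longlonglongrightarrow> f x"
proof (rule tendstoI)
  fix \<epsilon> :: real assume "\<epsilon> > 0"
  then have "finite {m. \<not> dist (fs (n, m) x) (f x) < \<epsilon>}"
    using Ib_converges_row_finite[OF assms] by (simp add: dist_real_def not_less)
  then show "\<forall>\<^sub>F m in sequentially. dist (fs (n, m) x) (f x) < \<epsilon>"
    by (simp add: eventually_cofinite flip: cofinite_eq_sequentially)
qed

lemma pointwise_conv_on_complement:
  "pointwise_conv_on (UNIV - A_h h) fs f \<longleftrightarrow>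
     (\<forall>x \<epsilon>. \<epsilon> > 0 \<longrightarrow> finite ({d. \<epsilon> \<le> \<bar>fs d x - f x\<bar>} - A_h h))"
  unfolding pointwise_conv_on_def by (simp add: set_diff_eq conj_commute)

lemma pointwise_conv_on_subset:
  "pointwise_conv_on A fs f \<Longrightarrow> A' \<subseteq> A \<Longrightarrow> pointwise_conv_on A' fs f"
proof -
  assume conv: "pointwise_conv_on A fs f" and sub: "A' \<subseteq> A"
  have "{d \<in> A'. P d} \<subseteq> {d \<in> A. P d}" for P using sub by blast
  then show ?thesis using conv unfolding pointwise_conv_on_def by (meson finite_subset)
qed

definition Ib_diagonalizable :: "'a set set \<Rightarrow> bool" where
  "Ib_diagonalizable S \<longleftrightarrow>
     (\<forall>L :: nat \<times> nat \<Rightarrow> 'a set. range L \<subseteq> S \<longrightarrow> (\<forall>x. {d. x \<in> L d} \<in> I_b) \<longrightarrow>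
        (\<exists>h. \<forall>x. finite ({d. x \<in> L d} - A_h h)))"

lemma Ib_diagonalizableD:
  assumes "Ib_diagonalizable S" "\<And>d. L d \<in> S" "\<And>x. {d. x \<in> L d} \<in> I_b"
  obtains h where "\<And>x. finite ({d. x \<in> L d} - A_h h)"
  using assms unfolding Ib_diagonalizable_def by blast

lemma Ib_diagonalizable_subset: "Ib_diagonalizable S \<Longrightarrow> S' \<subseteq> S \<Longrightarrow> Ib_diagonalizable S'"
  unfolding Ib_diagonalizable_def by blast

abbreviation clopen :: "'a::topological_space set \<Rightarrow> bool" where
  "clopen S \<equiv> open S \<and> closed S"

lemma continuous_on_indicator_clopen:
  assumes "clopen (S :: 'a::topological_space set)"
  shows "continuous_on UNIV (indicator S :: 'a \<Rightarrow> real)"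
proof -
  have "indicator S -` B = (if 1 \<in> B then S else {}) \<union> (if 0 \<in> B then - S else {})"
    for B :: "real set" by (auto simp: indicator_def of_bool_def split: if_splits)
  then show ?thesis using assms by (simp add: continuous_on_open_vimage open_Compl)
qed

(* A boolean sequence that does not change after h and tends to b already equals b after h;
   this turns "no change of the approximants" into "no error of the approximants". *)
lemma eventually_const_after_stable:
  fixes p :: "nat \<Rightarrow> bool"
  assumes stable: "\<forall>k>h. p (Suc k) = p k" and lim: "\<forall>\<^sub>F k in sequentially. p k = b" and "k > h"
  shows "p k = b"
proof -
  have const: "p k = p (Suc h)" if "Suc h \<le> k" for k
    using that by (induction rule: dec_induct) (use stable in auto)
  obtain K where "\<forall>k\<ge>K. p k = b" using lim by (auto simp: eventually_sequentially)
  then have "p (max k K) = b" by simp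
  moreover have "p (max k K) = p k" using const \<open>k > h\<close> by (metis Suc_leI le_trans max.cobounded1)
  ultimately show ?thesis by simp
qed

definition clopen_limit :: "'a::topological_space set \<Rightarrow> bool" where
  "clopen_limit B \<longleftrightarrow>
     (\<exists>C :: nat \<Rightarrow> 'a set. (\<forall>k. clopen (C k)) \<and> (\<forall>x. \<forall>\<^sub>F k in sequentially. x \<in> C k \<longleftrightarrow> x \<in> B))"

lemma clopen_limits_choice:
  assumes "\<And>i. clopen_limit (B i)"
  obtains C :: "'i \<Rightarrow> nat \<Rightarrow> 'a::topological_space set"
  where "\<And>i k. clopen (C i k)" "\<And>i x. \<forall>\<^sub>F k in sequentially. x \<in> C i k \<longleftrightarrow> x \<in> B i"
proof -
  have "\<forall>i. \<exists>C. (\<forall>k. clopen (C k)) \<and> (\<forall>x. \<forall>\<^sub>F k in sequentially. x \<in> C k \<longleftrightarrow> x \<in> B i)"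
    using assms unfolding clopen_limit_def by blast
  then obtain C
    where C: "\<forall>i. (\<forall>k. clopen (C i k)) \<and> (\<forall>x. \<forall>\<^sub>F k in sequentially. x \<in> C i k \<longleftrightarrow> x \<in> B i)"
    by (rule choice[THEN exE])
  show ?thesis by (rule that[of C]) (use C in blast)+
qed

(* Proof: diagonalize the
   clopen "change sets" C i k xor C i (k+1), which each point meets only finitely often. *)
lemma clopen_limits_modulus:
  fixes C :: "'i::countable \<Rightarrow> nat \<Rightarrow> 'a::topological_space set"
  assumes diag: "Ib_diagonalizable {S :: 'a set. clopen S}"
    and clopen: "\<And>i k. clopen (C i k)"
    and lim: "\<And>i x. \<forall>\<^sub>F k in sequentially. x \<in> C i k \<longleftrightarrow> x \<in> B i"
  shows "\<exists>g. \<forall>x. finite {i. \<exists>k>g i. (x \<in> C i k) \<noteq> (x \<in> B i)}"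
proof -
  define L where "L = (\<lambda>(n, k). let c = C (from_nat n) in (c k - c (Suc k)) \<union> (c (Suc k) - c k))"
  have L_iff: "x \<in> L (n, k) \<longleftrightarrow> (x \<in> C (from_nat n) (Suc k)) \<noteq> (x \<in> C (from_nat n) k)" for x n k
    by (auto simp: L_def Let_def)
  have "clopen (L d)" for d
    using clopen by (auto simp: L_def Let_def split: prod.split intro!: open_Un closed_Un open_Diff closed_Diff)
  moreover have "{d. x \<in> L d} \<in> I_b" for x
  proof (unfold I_b_iff_rows_finite, intro allI)
    fix n
    have "\<forall>\<^sub>F k in sequentially. x \<notin> L (n, k)"
    proof -
      note lim_n = lim[where i="from_nat n" and x=x]
      from lim_n eventually_sequentially_Suc[THEN iffD2, OF lim_n]
      show ?thesis by eventually_elim (simp add: L_iff)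
    qed
    then show "finite {k. (n, k) \<in> {d. x \<in> L d}}"
      by (simp add: eventually_cofinite flip: cofinite_eq_sequentially)
  qed
  ultimately obtain h where h: "\<And>x. finite ({d. x \<in> L d} - A_h h)"
    using Ib_diagonalizableD[OF diag, of L] by blast
  have "{i. \<exists>k>h (to_nat i). (x \<in> C i k) \<noteq> (x \<in> B i)} \<subseteq> (from_nat \<circ> fst) ` ({d. x \<in> L d} - A_h h)" for x
  proof
    fix i assume "i \<in> {i. \<exists>k>h (to_nat i). (x \<in> C i k) \<noteq> (x \<in> B i)}"
    then obtain k where "k > h (to_nat i)" "(x \<in> C i k) \<noteq> (x \<in> B i)" by blast
    have "\<exists>k'>h (to_nat i). x \<in> L (to_nat i, k')"
    proof (rule ccontr)
      assume "\<not> (\<exists>k'>h (to_nat i). x \<in> L (to_nat i, k'))"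
      then have "\<forall>k'>h (to_nat i). (x \<in> C i (Suc k')) = (x \<in> C i k')" by (simp add: L_iff)
      from eventually_const_after_stable[OF this lim \<open>k > h (to_nat i)\<close>]
      show False using \<open>(x \<in> C i k) \<noteq> (x \<in> B i)\<close> by simp
    qed
    then obtain k' where "k' > h (to_nat i)" "x \<in> L (to_nat i, k')" by blast
    then have "(to_nat i, k') \<in> {d. x \<in> L d} - A_h h" by (simp add: A_h_def)
    then show "i \<in> (from_nat \<circ> fst) ` ({d. x \<in> L d} - A_h h)" by (rule rev_image_eqI) simp
  qed
  then have "finite {i. \<exists>k>h (to_nat i). (x \<in> C i k) \<noteq> (x \<in> B i)}" for x
    using h by (rule finite_subset[OF _ finite_imageI])
  then show ?thesis by (intro exI[of _ "h \<circ> to_nat"]) simp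
qed

lemma clopen_limit_clopen: "clopen B \<Longrightarrow> clopen_limit B"
  unfolding clopen_limit_def by (intro exI[of _ "\<lambda>_. B"]) auto

lemma clopen_limit_Compl: "clopen_limit B \<Longrightarrow> clopen_limit (- B)"
  unfolding clopen_limit_def
proof (elim exE conjE)
  fix C :: "nat \<Rightarrow> 'a set"
  assume "\<forall>k. clopen (C k)" "\<forall>x. \<forall>\<^sub>F k in sequentially. x \<in> C k \<longleftrightarrow> x \<in> B"
  then show "\<exists>C. (\<forall>k. clopen (C k)) \<and> (\<forall>x. \<forall>\<^sub>F k in sequentially. x \<in> C k \<longleftrightarrow> x \<in> - B)"
    by (intro exI[of _ "\<lambda>k. - C k"]) (simp add: open_Compl closed_Compl)
qed

(* ... and, given diagonalizable clopen sets, under countable unions: the n-th approximants,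
   shifted beyond the modulus, are joined over n <= k. *)
lemma clopen_limit_UN:
  fixes B :: "nat \<Rightarrow> 'a::topological_space set"
  assumes diag: "Ib_diagonalizable {S :: 'a set. clopen S}" and lims: "\<And>n. clopen_limit (B n)"
  shows "clopen_limit (\<Union>n. B n)"
proof -
  obtain C :: "nat \<Rightarrow> nat \<Rightarrow> 'a set" where clopen: "\<And>n k. clopen (C n k)"
    and lim: "\<And>n x. \<forall>\<^sub>F k in sequentially. x \<in> C n k \<longleftrightarrow> x \<in> B n"
    using clopen_limits_choice[of B, OF lims] by blast
  obtain g where g: "\<And>x. finite {n. \<exists>k>g n. (x \<in> C n k) \<noteq> (x \<in> B n)}"
    using clopen_limits_modulus[where C=C and B=B, OF diag clopen lim] by blast
  define D where "D k = (\<Union>n\<le>k. C n (k + Suc (g n)))" for k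
  have "clopen (D k)" for k
    using clopen by (auto simp: D_def intro!: open_UN closed_UN)
  moreover have "\<forall>\<^sub>F k in sequentially. x \<in> D k \<longleftrightarrow> x \<in> (\<Union>n. B n)" for x
  proof (cases "x \<in> (\<Union>n. B n)")
    case True
    then obtain n where "x \<in> B n" by blast
    have "\<forall>\<^sub>F k in sequentially. x \<in> C n k" using lim[of x n] \<open>x \<in> B n\<close> by simp
    then have "\<forall>\<^sub>F k in sequentially. x \<in> C n (k + Suc (g n))"
      by (rule eventually_sequentially_seg[where P="\<lambda>k. x \<in> C n k", THEN iffD2])
    moreover have "\<forall>\<^sub>F k in sequentially. n \<le> k" by (rule eventually_ge_at_top)
    ultimately show ?thesis by eventually_elim (use True in \<open>auto simp: D_def\<close>)
  next
    case False
    define F where "F = {n. \<exists>k>g n. (x \<in> C n k) \<noteq> (x \<in> B n)}"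
    have eventually_outside: "\<forall>\<^sub>F k in sequentially. x \<notin> C n (k + Suc (g n))" for n
    proof -
      have "\<forall>\<^sub>F k in sequentially. x \<notin> C n k" using lim[of x n] False by simp
      then show ?thesis by (rule eventually_sequentially_seg[where P="\<lambda>k. x \<notin> C n k", THEN iffD2])
    qed
    have outside_F: "x \<notin> C n (k + Suc (g n))" if "n \<notin> F" for n k
      using that False by (auto simp: F_def)
    have "finite F" using g[of x] by (simp add: F_def)
    then have "\<forall>\<^sub>F k in sequentially. \<forall>n\<in>F. x \<notin> C n (k + Suc (g n))"
      by (rule eventually_ball_finite) (blast intro: eventually_outside)
    then show ?thesis by eventually_elim (use False outside_F in \<open>auto simp: D_def\<close>)
  qed
  ultimately show ?thesis unfolding clopen_limit_def by blast
qed

lemma borel_sets_clopen_limit: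
  assumes diag: "Ib_diagonalizable {S :: 'a::topological_space set. clopen S}"
    and clopen_basis: "\<forall>U :: 'a set. open U \<longrightarrow> (\<exists>C. countable C \<and> (\<forall>c\<in>C. clopen c) \<and> U = \<Union>C)"
    and borel: "B \<in> sets (borel :: 'a measure)"
  shows "clopen_limit B"
proof -
  have open_clopen_limit: "clopen_limit U" if U_open: "open U" for U :: "'a set"
  proof -
    obtain C where C: "countable C" "\<forall>c\<in>C. clopen c" "U = \<Union>C"
      using clopen_basis[rule_format, OF U_open] by blast
    show ?thesis
    proof (cases "C = {}")
      case True
      then show ?thesis using C by (simp add: clopen_limit_clopen)
    next
      case False
      then have "U = (\<Union>n. from_nat_into C n)" using C(3) range_from_nat_into[OF False C(1)] by simp
      moreover have "clopen_limit (from_nat_into C n)" for n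
        using C(2) from_nat_into[OF False, of n] by (intro clopen_limit_clopen) blast
      ultimately show ?thesis using clopen_limit_UN[OF diag, of "from_nat_into C"] by simp
    qed
  qed
  have "B \<in> sigma_sets UNIV {S. open S}" using borel by (simp add: sets_borel)
  then show ?thesis
  proof (induction rule: sigma_sets.induct)
    case (Basic a)
    then show ?case by (simp add: open_clopen_limit)
  next
    case Empty
    then show ?case by (simp add: clopen_limit_clopen)
  next
    case (Compl a)
    then show ?case using clopen_limit_Compl[of a] by (simp add: Compl_eq_Diff_UNIV)
  next
    case (Union a)
    then show ?case using clopen_limit_UN[OF diag, of a] by simp
  qed
qed

(* Diagonalizability passes from clopen sets to clopen limits: replace every T d by a clopen
   approximant that differs from it at each point for only finitely many d. *)
lemma Ib_diagonalizable_clopen_limits: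
  assumes diag: "Ib_diagonalizable {S :: 'a::topological_space set. clopen S}"
  shows "Ib_diagonalizable {S :: 'a set. clopen_limit S}"
proof (unfold Ib_diagonalizable_def, intro allI impI)
  fix T :: "nat \<times> nat \<Rightarrow> 'a set"
  assume "range T \<subseteq> {S. clopen_limit S}" and T_Ib: "\<forall>x. {d. x \<in> T d} \<in> I_b"
  then have "clopen_limit (T d)" for d by blast
  then obtain C :: "nat \<times> nat \<Rightarrow> nat \<Rightarrow> 'a set" where clopen: "\<And>d k. clopen (C d k)"
    and lim: "\<And>d x. \<forall>\<^sub>F k in sequentially. x \<in> C d k \<longleftrightarrow> x \<in> T d"
    using clopen_limits_choice[of T] by blast
  obtain g where g: "\<And>x. finite {d. \<exists>k>g d. (x \<in> C d k) \<noteq> (x \<in> T d)}"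
    using clopen_limits_modulus[where C=C and B=T, OF diag clopen lim] by blast
  define M where "M d = C d (Suc (g d))" for d
  define E where "E x = {d. (x \<in> M d) \<noteq> (x \<in> T d)}" for x
  have E_finite: "finite (E x)" for x
    by (rule finite_subset[OF _ g[of x]]) (auto simp: E_def M_def)
  have "{d. x \<in> M d} \<in> I_b" for x
  proof (rule I_b_subset)
    show "{d. x \<in> T d} \<union> E x \<in> I_b" using T_Ib E_finite by (simp add: I_b_Un_finite)
  qed (auto simp: E_def)
  then obtain h where h: "\<And>x. finite ({d. x \<in> M d} - A_h h)"
    using Ib_diagonalizableD[OF diag, of M] clopen by (auto simp: M_def)
  have "{d. x \<in> T d} - A_h h \<subseteq> ({d. x \<in> M d} - A_h h) \<union> E x" for x
    by (auto simp: E_def)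
  then have "finite ({d. x \<in> T d} - A_h h)" for x
    by (rule finite_subset) (simp add: h E_finite)
  then show "\<exists>h. \<forall>x. finite ({d. x \<in> T d} - A_h h)" by blast
qed

lemma Ib_diagonalizable_clopen_if_property:
  assumes "bounded_ideal_convergence_property TYPE('a::topological_space)"
  shows "Ib_diagonalizable {S :: 'a set. clopen S}"
proof (unfold Ib_diagonalizable_def, intro allI impI)
  fix L :: "nat \<times> nat \<Rightarrow> 'a set"
  assume clopen: "range L \<subseteq> {S. clopen S}" and L_Ib: "\<forall>x. {d. x \<in> L d} \<in> I_b"
  define fs where "fs d = (indicator (L d) :: 'a \<Rightarrow> real)" for d
  have level_set: "{d. 1 \<le> \<bar>fs d x\<bar>} = {d. x \<in> L d}" for x
    by (auto simp: fs_def indicator_def)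
  have "continuous_on UNIV (fs d)" for d
    using clopen by (auto simp: fs_def intro: continuous_on_indicator_clopen)
  moreover have "Ib_converges fs (\<lambda>_. 0)"
    unfolding Ib_converges_iff
  proof (intro allI impI)
    fix x and \<epsilon> :: real assume "\<epsilon> > 0"
    then have "{d. \<epsilon> \<le> \<bar>fs d x - 0\<bar>} \<subseteq> {d. x \<in> L d}"
      by (auto simp: fs_def indicator_def)
    then show "{d. \<epsilon> \<le> \<bar>fs d x - 0\<bar>} \<in> I_b" using L_Ib I_b_subset by blast
  qed
  ultimately obtain A where "A \<in> I_b_dual" "pointwise_conv_on A fs (\<lambda>_. 0)"
    using assms unfolding bounded_ideal_convergence_property_def by blast
  then obtain h where "pointwise_conv_on (UNIV - A_h h) fs (\<lambda>_. 0)"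
    using pointwise_conv_on_subset unfolding I_b_dual_iff_cofinal by blast
  then have "finite ({d. 1 \<le> \<bar>fs d x - 0\<bar>} - A_h h)" for x
    unfolding pointwise_conv_on_complement using zero_less_one by blast
  then have "finite ({d. x \<in> L d} - A_h h)" for x
    using level_set by simp
  then show "\<exists>h. \<forall>x. finite ({d. x \<in> L d} - A_h h)" by blast
qed

(* Diagonalizable Borel sets yield property (4): diagonalize the Borel sets where fs (n,m) is at
   least 1/(n+1) away from f; rows n below 1/epsilon contribute finitely many bad indices anyway. *)
lemma Ib_convergence_of_borel_functions:
  fixes fs :: "nat \<times> nat \<Rightarrow> 'a::topological_space \<Rightarrow> real"
  assumes diag: "Ib_diagonalizable (sets (borel :: 'a measure))"
    and meas: "\<And>d. fs d \<in> borel_measurable borel" and conv: "Ib_converges fs f"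
  shows "\<exists>A\<in>I_b_dual. pointwise_conv_on A fs f"
proof -
  have f_meas: "f \<in> borel_measurable borel"
    by (rule borel_measurable_LIMSEQ_real[where u="\<lambda>m. fs (0, m)"])
      (simp_all add: Ib_converges_row_tendsto[OF conv] meas)
  define T where "T d = {x. inverse (real (Suc (fst d))) \<le> \<bar>fs d x - f x\<bar>}" for d
  have "T d \<in> sets borel" for d
  proof -
    have "(\<lambda>x. \<bar>fs d x - f x\<bar>) \<in> borel_measurable borel"
      by (intro borel_measurable_abs borel_measurable_diff meas f_meas)
    from this[unfolded borel_measurable_iff_ge, rule_format, of "inverse (real (Suc (fst d)))"]
    show ?thesis by (simp add: T_def)
  qed
  moreover have "{d. x \<in> T d} \<in> I_b" for x
    unfolding I_b_iff_rows_finite T_def using Ib_converges_row_finite[OF conv] by simp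
  ultimately obtain h where h: "\<And>x. finite ({d. x \<in> T d} - A_h h)"
    using Ib_diagonalizableD[OF diag, of T] by blast
  have "pointwise_conv_on (UNIV - A_h h) fs f"
    unfolding pointwise_conv_on_complement
  proof (intro allI impI)
    fix x and \<epsilon> :: real assume "\<epsilon> > 0"
    then obtain N where "N > 0" "inverse (real N) < \<epsilon>" using ex_inverse_of_nat_less by blast
    let ?far = "{d. \<epsilon> \<le> \<bar>fs d x - f x\<bar>}"
    have "?far - A_h h \<subseteq> {d \<in> ?far. fst d < N} \<union> ({d. x \<in> T d} - A_h h)"
    proof
      fix d assume d: "d \<in> ?far - A_h h"
      show "d \<in> {d \<in> ?far. fst d < N} \<union> ({d. x \<in> T d} - A_h h)"
      proof (cases "fst d < N")
        case False
        then have "inverse (real (Suc (fst d))) \<le> inverse (real N)"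
          using \<open>N > 0\<close> by (intro le_imp_inverse_le) auto
        then have "x \<in> T d" using \<open>inverse (real N) < \<epsilon>\<close> d by (simp add: T_def)
        then show ?thesis using d by blast
      qed (use d in blast)
    qed
    moreover have "finite {d \<in> ?far. fst d < N}"
      using conv \<open>\<epsilon> > 0\<close> by (intro I_b_finitely_many_rows) (simp add: Ib_converges_iff)
    ultimately show "finite (?far - A_h h)"
      using h[of x] by (rule finite_subset[OF _ finite_UnI])
  qed
  moreover have "UNIV - A_h h \<in> I_b_dual" by (auto simp: I_b_dual_iff_cofinal)
  ultimately show ?thesis by blast
qed

theorem mainTheorem15:
  assumes clopen_basis: "\<forall>U :: 'a::topological_space set. open U \<longrightarrow>
      (\<exists>C. countable C \<and> (\<forall>c\<in>C. open c \<and> closed c) \<and> U = \<Union>C)"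
  defines "P1 \<equiv> bounded_ideal_convergence_property TYPE('a)"
  defines "P2 \<equiv> (\<forall>fs :: nat \<times> nat \<Rightarrow> 'a \<Rightarrow> real.
        (\<forall>d. fs d \<in> borel_measurable borel) \<longrightarrow> Ib_converges fs (\<lambda>_. 0) \<longrightarrow>
        (\<exists>A \<in> I_b_dual. pointwise_conv_on A fs (\<lambda>_. 0)))"
  defines "P3 \<equiv> (\<forall>(fs :: nat \<times> nat \<Rightarrow> 'a \<Rightarrow> real) f.
        (\<forall>d. fs d \<in> borel_measurable borel) \<longrightarrow> f \<in> borel_measurable borel \<longrightarrow>
        Ib_converges fs f \<longrightarrow>
        (\<exists>A \<in> I_b_dual. pointwise_conv_on A fs f))"
  defines "P4 \<equiv> (\<forall>(fs :: nat \<times> nat \<Rightarrow> 'a \<Rightarrow> real) f.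
        (\<forall>d. fs d \<in> borel_measurable borel) \<longrightarrow>
        Ib_converges fs f \<longrightarrow>
        (\<exists>A \<in> I_b_dual. pointwise_conv_on A fs f))"
  shows "(P1 \<longleftrightarrow> P2) \<and> (P2 \<longleftrightarrow> P3) \<and> (P3 \<longleftrightarrow> P4)"
proof -
  have "P4" if "P1"
  proof -
    have diag: "Ib_diagonalizable {S :: 'a set. clopen S}"
      using that unfolding P1_def by (rule Ib_diagonalizable_clopen_if_property)
    have "sets (borel :: 'a measure) \<subseteq> {S. clopen_limit S}"
      using borel_sets_clopen_limit[OF diag clopen_basis] by blast
    with Ib_diagonalizable_clopen_limits[OF diag]
    have "Ib_diagonalizable (sets (borel :: 'a measure))" by (rule Ib_diagonalizable_subset)
    then show ?thesis unfolding P4_def using Ib_convergence_of_borel_functions by blast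
  qed
  moreover have "P4 \<Longrightarrow> P3" unfolding P3_def P4_def by blast
  moreover have "P3 \<Longrightarrow> P2" unfolding P2_def P3_def by simp
  moreover have "P2 \<Longrightarrow> P1"
    unfolding P1_def P2_def bounded_ideal_convergence_property_def
    using borel_measurable_continuous_onI by blast
  ultimately show ?thesis by blast
qed

end
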